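(* (a) For all $S\in\{L,R\}^*$, $M(S)\equiv N(S)\pmod 2$. (b) Let $S=S(k_0,\dots,k_m)$ and $S'=S(k'_0,\dots,k'_n)$ be strings, and set $k_i=0$ for $i>m$ and $k'_i=0$ for $i>n$. Then $r(S)<r(S')$ if and only if there is an index $i\geq0$ such that $k_j=k'_j$ for all $j<i$ and either $i$ is even and $k_i<k'_i$, or $i$ is odd and $k_i>k'_i$ (an "alternating lexicographic" ordering of $(k_0,k_1,k_2,\dots)$).
   Context: $\{L,R\}^*$ is the free monoid on $L,R$ (strings), with empty string $\varepsilon$; $|S|$ is the number of symbols of $S$. For $k_0\geq 0$, $k_1,\dots,k_m\geq 1$, $S(k_0,\dots,k_m)$ is the string $R^{k_0}L^{k_1}R^{k_2}\cdots$ with $m+1$ alternating blocks (last block $R^{k_m}$ if $m$ even, $L^{k_m}$ if $m$ odd); each string has exactly one such representation, with $\varepsilon=S(0)$. Define $M(\varepsilon)=0$ and $M(S(k_0,\dots,k_m))=m$ (where $k_m\geq1$ if $m\geq 1$). Define $N(\varepsilon)=0$, $N(SL)=2N(S)+1$, $N(SR)=2N(S)+2$. Define $r(\varepsilon)=1$, $r(SL)=r(S)-2^{-|SL|}$, $r(SR)=r(S)+2^{-|SR|}$. *)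

theory Defs
  imports Complex_Main
begin

datatype sym = L | R

definition mkS :: "nat list \<Rightarrow> sym list" where
  "mkS ks = concat (map (\<lambda>i. replicate (ks ! i) (if even i then R else L)) [0..<length ks])"

definition valid_blocks :: "nat list \<Rightarrow> bool" where
  "valid_blocks ks \<longleftrightarrow> ks \<noteq> [] \<and> (\<forall>i. 1 \<le> i \<longrightarrow> i < length ks \<longrightarrow> 1 \<le> ks ! i)"

definition M :: "sym list \<Rightarrow> nat" where
  "M S = (THE m. \<exists>ks. valid_blocks ks \<and> length ks = Suc m \<and> mkS ks = S)"

text \<open>N and r defined by recursion on appending a symbol at the right end;
  we recurse on the reversed string.\<close>
fun N_rev :: "sym list \<Rightarrow> nat" where
  "N_rev [] = 0"
| "N_rev (L # s) = 2 * N_rev s + 1"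
| "N_rev (R # s) = 2 * N_rev s + 2"

definition N :: "sym list \<Rightarrow> nat" where
  "N S = N_rev (rev S)"

fun r_rev :: "sym list \<Rightarrow> real" where
  "r_rev [] = 1"
| "r_rev (L # s) = r_rev s - (1/2) ^ (length s + 1)"
| "r_rev (R # s) = r_rev s + (1/2) ^ (length s + 1)"

definition r :: "sym list \<Rightarrow> real" where
  "r S = r_rev (rev S)"

definition kext :: "nat list \<Rightarrow> nat \<Rightarrow> nat" where
  "kext ks i = (if i < length ks then ks ! i else 0)"

end

theory Submission
  imports Defs
begin

text \<open>Swapping L and R reflects r about 1, so reading S(k_0,\<dots>,k_m) block by block gives
  r(S(k_0,k_1,\<dots>)) = 2 - 2^{-k_0} r(S(k_1,k_2,\<dots>)). For admissible tails the inner value lies in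
  [1,2), so the first block decides the comparison and equal first blocks reverse the comparison
  of the tails: this is the alternating lexicographic order, and injectivity of r on admissible
  block lists gives the uniqueness of the representation. For (a), both M(S) and N(S) are odd
  exactly when S ends in L.\<close>

fun flip :: "sym \<Rightarrow> sym" where
  "flip L = R"
| "flip R = L"

fun blocks_val :: "nat list \<Rightarrow> real" where
  "blocks_val [] = 1"
| "blocks_val (k # ks) = 2 - (1/2) ^ k * blocks_val ks"

definition alt_less :: "nat list \<Rightarrow> nat list \<Rightarrow> bool" where
  "alt_less ks ks' \<longleftrightarrow> (\<exists>i. (\<forall>j<i. kext ks j = kext ks' j) \<and>
     ((even i \<and> kext ks i < kext ks' i) \<or> (odd i \<and> kext ks i > kext ks' i)))"

lemma mkS_Nil [simp]: "mkS [] = []"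
  by (simp add: mkS_def)

lemma mkS_Cons: "mkS (k # ks) = replicate k R @ map flip (mkS ks)"
proof -
  have "[0..<length (k # ks)] = 0 # map Suc [0..<length ks]"
    by (simp add: upt_conv_Cons map_Suc_upt del: upt_Suc)
  moreover have flip_parity: "flip (if even i then R else L) = (if odd i then R else L)" for i
    by simp
  ultimately show ?thesis
    by (simp add: mkS_def map_concat comp_def flip_parity del: upt_Suc)
qed

lemma mkS_snoc:
  "mkS (ks @ [k]) = mkS ks @ replicate k (if even (length ks) then R else L)"
  unfolding mkS_def by (auto simp: nth_append intro!: arg_cong[where f = concat])

lemma valid_blocks_iff: "valid_blocks ks \<longleftrightarrow> (\<exists>k a. ks = k # a \<and> 0 \<notin> set a)"
proof
  assume "valid_blocks ks"
  then obtain k a where ks: "ks = k # a" and pos: "\<forall>i. 1 \<le> i \<longrightarrow> i < length ks \<longrightarrow> 1 \<le> ks ! i"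
    unfolding valid_blocks_def by (cases ks) auto
  have "a ! j \<noteq> 0" if "j < length a" for j
    using pos[rule_format, of "Suc j"] that ks by simp
  then show "\<exists>k a. ks = k # a \<and> 0 \<notin> set a"
    using ks by (auto simp: in_set_conv_nth)
next
  assume "\<exists>k a. ks = k # a \<and> 0 \<notin> set a"
  then obtain k a where ks: "ks = k # a" and pos: "0 \<notin> set a"
    by blast
  have "a ! j \<noteq> 0" if "j < length a" for j
    using pos nth_mem[OF that] by metis
  then have "1 \<le> ks ! i" if "1 \<le> i" "i < length ks" for i
    using that ks by (cases i) (auto simp: Suc_le_eq)
  then show "valid_blocks ks"
    using ks by (simp add: valid_blocks_def)
qed

lemma r_append: "r (P @ T) = r P + (1/2) ^ length P * (r T - 1)"
proof -
  have "r_rev (s @ p) = r_rev p + (1/2) ^ length p * (r_rev s - 1)" for s p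
    by (induction s rule: r_rev.induct) (simp_all add: algebra_simps power_add)
  then show ?thesis
    by (simp add: r_def)
qed

lemma r_map_flip: "r (map flip S) = 2 - r S"
proof -
  have "r_rev (map flip s) = 2 - r_rev s" for s
    by (induction s rule: r_rev.induct) auto
  then show ?thesis
    by (simp add: r_def rev_map)
qed

lemma r_replicate_R: "r (replicate k R) = 2 - (1/2) ^ k"
proof -
  have "r_rev (replicate k R) = 2 - (1/2) ^ k"
    by (induction k) auto
  then show ?thesis
    by (simp add: r_def)
qed

lemma r_mkS: "r (mkS ks) = blocks_val ks"
  by (induction ks) (simp_all add: r_def[of "[]"] mkS_Cons r_append r_map_flip r_replicate_R
      algebra_simps)

lemma blocks_val_bounds:
  assumes "0 \<notin> set ks"
  shows "1 \<le> blocks_val ks" "blocks_val ks < 2" "ks \<noteq> [] \<Longrightarrow> 1 < blocks_val ks"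
proof -
  have "1 \<le> blocks_val ks \<and> blocks_val ks < 2 \<and> (ks \<noteq> [] \<longrightarrow> 1 < blocks_val ks)"
    using assms
  proof (induction ks)
    case (Cons k ks)
    then have IH: "1 \<le> blocks_val ks" "blocks_val ks < 2" and "1 \<le> k"
      by auto
    then have "(1/2::real) ^ k * 2 \<le> 1"
      using power_decreasing[of 1 k "1/2::real"] by simp
    moreover have "(1/2::real) ^ k * blocks_val ks < (1/2) ^ k * 2"
      using IH by simp
    ultimately have "(1/2::real) ^ k * blocks_val ks < 1"
      by linarith
    moreover have "0 < (1/2::real) ^ k * blocks_val ks"
      using IH by simp
    ultimately show ?case
      by simp
  qed simp
  then show "1 \<le> blocks_val ks" "blocks_val ks < 2" "ks \<noteq> [] \<Longrightarrow> 1 < blocks_val ks"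
    by auto
qed

text \<open>A smaller first block wins: 2^{-q} v < 2 \<cdot> 2^{-q} \<le> 2^{-p} \<le> 2^{-p} v' for p < q.\<close>

lemma blocks_val_Cons_less_iff:
  assumes "0 \<notin> set ks" "0 \<notin> set ks'"
  shows "blocks_val (k # ks) < blocks_val (k' # ks') \<longleftrightarrow>
    k < k' \<or> (k = k' \<and> blocks_val ks' < blocks_val ks)"
proof -
  have dominate: "(1/2::real) ^ q * blocks_val b < (1/2) ^ p * blocks_val c"
    if "p < q" "0 \<notin> set b" "0 \<notin> set c" for p q b c
  proof -
    have "(1/2::real) ^ q * blocks_val b < (1/2) ^ q * 2"
      using blocks_val_bounds(2)[OF \<open>0 \<notin> set b\<close>] by simp
    also have "\<dots> = (1/2) ^ (q - 1)"
      using \<open>p < q\<close> by (cases q) auto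
    also have "\<dots> \<le> (1/2) ^ p"
      using \<open>p < q\<close> by (intro power_decreasing) auto
    also have "\<dots> \<le> (1/2) ^ p * blocks_val c"
      using blocks_val_bounds(1)[OF \<open>0 \<notin> set c\<close>] by simp
    finally show ?thesis .
  qed
  show ?thesis
    using dominate[of k k' ks' ks] dominate[of k' k ks ks'] assms
    by (cases k k' rule: linorder_cases) auto
qed

lemma blocks_val_Cons_eq_iff:
  assumes "0 \<notin> set ks" "0 \<notin> set ks'"
  shows "blocks_val (k # ks) = blocks_val (k' # ks') \<longleftrightarrow>
    k = k' \<and> blocks_val ks = blocks_val ks'"
  using blocks_val_Cons_less_iff[OF assms, of k k'] blocks_val_Cons_less_iff[OF assms(2,1), of k' k]
  by (metis linorder_neq_iff)

lemma blocks_val_inj: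
  "0 \<notin> set ks \<Longrightarrow> 0 \<notin> set ks' \<Longrightarrow> blocks_val ks = blocks_val ks' \<Longrightarrow> ks = ks'"
proof (induction ks ks' rule: list_induct2')
  case (2 k ks)
  then show ?case
    using blocks_val_bounds(3)[of "k # ks"] by simp
next
  case (3 k' ks')
  then show ?case
    using blocks_val_bounds(3)[of "k' # ks'"] by simp
next
  case (4 k ks k' ks')
  then show ?case
    by (auto simp del: blocks_val.simps(2) simp: blocks_val_Cons_eq_iff)
qed simp

lemma kext_Cons [simp]: "kext (k # ks) 0 = k" "kext (k # ks) (Suc j) = kext ks j"
  by (simp_all add: kext_def)

lemma kext_Nil [simp]: "kext [] j = 0"
  by (simp add: kext_def)

lemma alt_less_Cons_Cons:
  "alt_less (k # ks) (k' # ks') \<longleftrightarrow> k < k' \<or> (k = k' \<and> alt_less ks' ks)"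
proof
  assume "alt_less (k # ks) (k' # ks')"
  then obtain i where agree: "\<forall>j<i. kext (k # ks) j = kext (k' # ks') j" and
    differ: "(even i \<and> kext (k # ks) i < kext (k' # ks') i) \<or>
             (odd i \<and> kext (k # ks) i > kext (k' # ks') i)"
    unfolding alt_less_def by blast
  show "k < k' \<or> (k = k' \<and> alt_less ks' ks)"
  proof (cases i)
    case 0
    then show ?thesis
      using differ by simp
  next
    case (Suc j)
    then have "k = k'" "\<forall>j'<j. kext ks' j' = kext ks j'"
      using agree by (metis kext_Cons(1) zero_less_Suc, metis Suc_mono kext_Cons(2))
    moreover have "(even j \<and> kext ks' j < kext ks j) \<or> (odd j \<and> kext ks' j > kext ks j)"
      using differ Suc by auto
    ultimately show ?thesis
      unfolding alt_less_def by blast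
  qed
next
  assume "k < k' \<or> (k = k' \<and> alt_less ks' ks)"
  then show "alt_less (k # ks) (k' # ks')"
  proof
    assume "k < k'"
    then show ?thesis
      unfolding alt_less_def by (intro exI[of _ 0]) simp
  next
    assume "k = k' \<and> alt_less ks' ks"
    then obtain j where "k = k'" and agree: "\<forall>j'<j. kext ks' j' = kext ks j'" and
      differ: "(even j \<and> kext ks' j < kext ks j) \<or> (odd j \<and> kext ks' j > kext ks j)"
      unfolding alt_less_def by blast
    have "\<forall>i<Suc j. kext (k # ks) i = kext (k' # ks') i"
      using agree \<open>k = k'\<close> by (auto simp: less_Suc_eq_0_disj)
    moreover have "(even (Suc j) \<and> kext (k # ks) (Suc j) < kext (k' # ks') (Suc j)) \<or>
        (odd (Suc j) \<and> kext (k # ks) (Suc j) > kext (k' # ks') (Suc j))"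
      using differ by auto
    ultimately show ?thesis
      unfolding alt_less_def by blast
  qed
qed

lemma alt_less_Nil_Nil: "\<not> alt_less [] []"
  by (simp add: alt_less_def)

lemma alt_less_Nil_Cons: "0 < k \<Longrightarrow> alt_less [] (k # ks)"
  unfolding alt_less_def by (intro exI[of _ 0]) simp

lemma alt_less_Cons_Nil: "0 < k \<Longrightarrow> \<not> alt_less (k # ks) []"
  unfolding alt_less_def by (metis kext_Cons(1) kext_Nil not_less_zero odd_pos zero_less_iff_neq_zero)

text \<open>Both directions are proved together, since equal first blocks swap the roles of the tails.\<close>

lemma blocks_val_less_iff_alt_less:
  "0 \<notin> set ks \<Longrightarrow> 0 \<notin> set ks' \<Longrightarrow>
    (blocks_val ks < blocks_val ks' \<longleftrightarrow> alt_less ks ks') \<and>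
    (blocks_val ks' < blocks_val ks \<longleftrightarrow> alt_less ks' ks)"
proof (induction ks ks' rule: list_induct2')
  case 1
  then show ?case
    by (simp add: alt_less_Nil_Nil)
next
  case (2 k ks)
  then show ?case
    using blocks_val_bounds(3)[of "k # ks"] alt_less_Nil_Cons alt_less_Cons_Nil by auto
next
  case (3 k' ks')
  then show ?case
    using blocks_val_bounds(3)[of "k' # ks'"] alt_less_Nil_Cons alt_less_Cons_Nil by auto
next
  case (4 k ks k' ks')
  then show ?case
    by (auto simp del: blocks_val.simps(2) simp: blocks_val_Cons_less_iff alt_less_Cons_Cons)
qed

lemma r_mkS_less_iff_alt_less:
  assumes "valid_blocks ks" "valid_blocks ks'"
  shows "r (mkS ks) < r (mkS ks') \<longleftrightarrow> alt_less ks ks'"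
proof -
  obtain k a k' a' where "ks = k # a" "0 \<notin> set a" "ks' = k' # a'" "0 \<notin> set a'"
    using assms by (auto simp: valid_blocks_iff)
  then show ?thesis
    using blocks_val_less_iff_alt_less[of a a']
    by (simp del: blocks_val.simps(2) add: r_mkS blocks_val_Cons_less_iff alt_less_Cons_Cons)
qed

lemma mkS_inj:
  assumes "valid_blocks ks" "valid_blocks ks'" "mkS ks = mkS ks'"
  shows "ks = ks'"
proof -
  obtain k a k' a' where "ks = k # a" "0 \<notin> set a" "ks' = k' # a'" "0 \<notin> set a'"
    using assms(1,2) by (auto simp: valid_blocks_iff)
  then show ?thesis
    using arg_cong[OF assms(3), of r] blocks_val_inj[of a a']
    by (simp del: blocks_val.simps(2) add: r_mkS blocks_val_Cons_eq_iff)
qed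

lemma M_mkS:
  assumes "valid_blocks ks"
  shows "M (mkS ks) = length ks - 1"
  unfolding M_def
proof (rule the_equality)
  show "\<exists>ks'. valid_blocks ks' \<and> length ks' = Suc (length ks - 1) \<and> mkS ks' = mkS ks"
    using assms by (auto simp: valid_blocks_def)
  show "m = length ks - 1" if "\<exists>ks'. valid_blocks ks' \<and> length ks' = Suc m \<and> mkS ks' = mkS ks"
    for m
    using that assms mkS_inj by fastforce
qed

text \<open>Appending the symbol of the last block lengthens it; appending the other symbol opens a new
  block of length 1. In both cases the parity of the block count tracks the last symbol, as does
  the parity of N.\<close>

lemma exists_blocks_parity:
  "\<exists>ks. valid_blocks ks \<and> mkS ks = S \<and> (length ks - 1) mod 2 = N S mod 2"
proof (induction S rule: rev_induct)
  case Nil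
  show ?case
    by (intro exI[of _ "[0]"]) (simp add: valid_blocks_def mkS_def N_def)
next
  case (snoc x S)
  then obtain ks where ks: "valid_blocks ks" "mkS ks = S" "(length ks - 1) mod 2 = N S mod 2"
    by blast
  then obtain b k where b: "ks = b @ [k]"
    unfolding valid_blocks_def by (metis rev_exhaust)
  define c where "c = (if even (length b) then R else L)"
  have "\<forall>i. 1 \<le> i \<longrightarrow> i < length b \<longrightarrow> 1 \<le> b ! i"
    using ks(1) b unfolding valid_blocks_def by (auto simp: nth_append)
  then have valid_extend: "valid_blocks (b @ [Suc k])"
    and valid_new: "valid_blocks (b @ [k, 1])"
    using ks(1) b unfolding valid_blocks_def by (auto simp: nth_append nth_Cons split: nat.splits)
  have S: "S = mkS b @ replicate k c"
    using ks(2) b by (simp add: mkS_snoc c_def)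
  have "mkS (b @ [Suc k]) = S @ [c]"
    unfolding S by (simp add: mkS_snoc c_def replicate_append_same)
  moreover have "mkS (b @ [k, 1]) = S @ [flip c]"
    using ks(2) b mkS_snoc[of "b @ [k]" 1] by (simp add: mkS_snoc c_def)
  moreover have "N (S @ [L]) = 2 * N S + 1" "N (S @ [R]) = 2 * N S + 2"
    by (simp_all add: N_def)
  ultimately show ?case
    using valid_extend valid_new b ks(3) unfolding c_def
    by (cases x; cases "even (length b)")
       (fastforce simp: odd_iff_mod_2_eq_one intro: exI[of _ "b @ [Suc k]"] exI[of _ "b @ [k, 1]"])+
qed

theorem corollary3:
  shows "(\<forall>S. M S mod 2 = N S mod 2) \<and>
    (\<forall>ks ks'. valid_blocks ks \<longrightarrow> valid_blocks ks' \<longrightarrow>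
      (r (mkS ks) < r (mkS ks') \<longleftrightarrow>
        (\<exists>i. (\<forall>j<i. kext ks j = kext ks' j) \<and>
             ((even i \<and> kext ks i < kext ks' i) \<or> (odd i \<and> kext ks i > kext ks' i)))))"
proof (intro conjI allI impI)
  fix S
  obtain ks where "valid_blocks ks" "mkS ks = S" "(length ks - 1) mod 2 = N S mod 2"
    using exists_blocks_parity by blast
  then show "M S mod 2 = N S mod 2"
    using M_mkS by metis
next
  fix ks ks'
  assume "valid_blocks ks" "valid_blocks ks'"
  then show "r (mkS ks) < r (mkS ks') \<longleftrightarrow>
      (\<exists>i. (\<forall>j<i. kext ks j = kext ks' j) \<and>
           ((even i \<and> kext ks i < kext ks' i) \<or> (odd i \<and> kext ks i > kext ks' i)))"
    using r_mkS_less_iff_alt_less unfolding alt_less_def by blast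
qed

end
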